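(* Let $s$ be a strong divisor of a local ring $R$ that is not a unit, and let $S:=R_s$, so that $R\subset S$ is Prüfer. Set $P:=\bigcap_{n\in\mathbb N}Rs^n$. Then $P$ is a prime ideal of $R$ such that the set $\{Q\in\mathrm{Spec}(R): Q\subseteq P\}$ is open in $\mathrm{Spec}(R)$ (in fact equal to $\mathrm D(s)$); moreover $S=R_P$, $PS=P$, $P$ is a divided prime ideal of $R$ (i.e. comparable under inclusion to every ideal of $R$), and $R/P$ is a valuation domain whose quotient field is $S/P$.
   Context: All rings are commutative with identity; "local" means having a unique maximal ideal. A strong divisor of a local ring $R$ is a regular element $t\in R$ such that $Rt$ is comparable under inclusion with every ideal of $R$. $\mathrm D(s)=\{Q\in\mathrm{Spec}(R): s\notin Q\}$. An extension $A\subseteq B$ is Prüfer if $A\subseteq C$ is a flat epimorphism for each intermediate ring $C$. *)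

theory Defs
  imports Main
begin

text \<open>Commutative rings with identity are modelled by the type class comm_ring_1;
  the ring R is the whole type.\<close>

definition cr_ideal :: "'a::comm_ring_1 set \<Rightarrow> bool" where
  "cr_ideal I \<longleftrightarrow> 0 \<in> I \<and> (\<forall>x\<in>I. \<forall>y\<in>I. x + y \<in> I) \<and> (\<forall>r. \<forall>x\<in>I. r * x \<in> I)"

definition cr_prime_ideal :: "'a::comm_ring_1 set \<Rightarrow> bool" where
  "cr_prime_ideal P \<longleftrightarrow> cr_ideal P \<and> P \<noteq> UNIV \<and> (\<forall>x y. x * y \<in> P \<longrightarrow> x \<in> P \<or> y \<in> P)"

definition cr_maximal_ideal :: "'a::comm_ring_1 set \<Rightarrow> bool" where
  "cr_maximal_ideal M \<longleftrightarrow> cr_ideal M \<and> M \<noteq> UNIV \<and>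
     (\<forall>I. cr_ideal I \<and> M \<subseteq> I \<longrightarrow> I = M \<or> I = UNIV)"

definition cr_local :: "'a::comm_ring_1 itself \<Rightarrow> bool" where
  "cr_local (_ :: 'a itself) \<longleftrightarrow> (\<exists>!M :: 'a set. cr_maximal_ideal M)"

definition cr_unit :: "'a::comm_ring_1 \<Rightarrow> bool" where
  "cr_unit x \<longleftrightarrow> (\<exists>y. x * y = 1)"

definition cr_regular :: "'a::comm_ring_1 \<Rightarrow> bool" where
  "cr_regular t \<longleftrightarrow> (\<forall>x. t * x = 0 \<longrightarrow> x = 0)"

definition principal :: "'a::comm_ring_1 \<Rightarrow> 'a set" where
  "principal t = range (\<lambda>r. r * t)"

definition strong_divisor :: "'a::comm_ring_1 \<Rightarrow> bool" where
  "strong_divisor t \<longleftrightarrow> cr_regular t \<and>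
     (\<forall>I. cr_ideal I \<longrightarrow> principal t \<subseteq> I \<or> I \<subseteq> principal t)"

definition Spec :: "'a::comm_ring_1 set set" where
  "Spec = {Q. cr_prime_ideal Q}"

definition Dopen :: "'a::comm_ring_1 \<Rightarrow> 'a set set" where
  "Dopen s = {Q \<in> Spec. s \<notin> Q}"

definition zariski_open :: "'a::comm_ring_1 set set \<Rightarrow> bool" where
  "zariski_open U \<longleftrightarrow> (\<exists>I::'a set. U = {Q \<in> Spec. \<not> I \<subseteq> Q})"

definition divided_prime :: "'a::comm_ring_1 set \<Rightarrow> bool" where
  "divided_prime P \<longleftrightarrow> cr_prime_ideal P \<and> (\<forall>I. cr_ideal I \<longrightarrow> P \<subseteq> I \<or> I \<subseteq> P)"

definition cr_hom :: "('a::comm_ring_1 \<Rightarrow> 'b::comm_ring_1) \<Rightarrow> bool" where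
  "cr_hom f \<longleftrightarrow> f 1 = 1 \<and> (\<forall>x y. f (x + y) = f x + f y) \<and> (\<forall>x y. f (x * y) = f x * f y)"

text \<open>phi : R \<rightarrow> S is (isomorphic to) the canonical map R \<rightarrow> T^{-1} R, for a multiplicative
  subset T (standard characterisation of the localization).\<close>
definition is_localization :: "'a::comm_ring_1 set \<Rightarrow> ('a \<Rightarrow> 'b::comm_ring_1) \<Rightarrow> bool" where
  "is_localization T phi \<longleftrightarrow> cr_hom phi \<and> (\<forall>t\<in>T. cr_unit (phi t)) \<and>
     (\<forall>y. \<exists>r. \<exists>t\<in>T. y * phi t = phi r) \<and>
     (\<forall>r. phi r = 0 \<longleftrightarrow> (\<exists>t\<in>T. t * r = 0))"

definition powers :: "'a::comm_ring_1 \<Rightarrow> 'a set" where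
  "powers s = range (\<lambda>n. s ^ n)"

definition ideal_gen :: "'a::comm_ring_1 set \<Rightarrow> 'a set" where
  "ideal_gen A = \<Inter>{I. cr_ideal I \<and> A \<subseteq> I}"

text \<open>R/P valuation domain (P prime): for any x,y, one of their classes divides the other in R/P.\<close>
definition valuation_quotient :: "'a::comm_ring_1 set \<Rightarrow> bool" where
  "valuation_quotient P \<longleftrightarrow> cr_prime_ideal P \<and>
     (\<forall>x y. (\<exists>r. x - r * y \<in> P) \<or> (\<exists>r. y - r * x \<in> P))"

text \<open>Given phi : R \<rightarrow> S and an ideal J of S with phi^{-1}(J) = P, S/J is the quotient field of R/P:
  S/J is a field, R/P \<rightarrow> S/J is injective, and every class of S/J is a fraction of classes of R/P.\<close>
definition quotient_field_of :: "('a::comm_ring_1 \<Rightarrow> 'b::comm_ring_1) \<Rightarrow> 'a set \<Rightarrow> 'b set \<Rightarrow> bool" where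
  "quotient_field_of phi P J \<longleftrightarrow> cr_ideal J \<and> J \<noteq> UNIV \<and>
     (\<forall>y. y \<notin> J \<longrightarrow> (\<exists>z. y * z - 1 \<in> J)) \<and>
     (\<forall>r. phi r \<in> J \<longleftrightarrow> r \<in> P) \<and>
     (\<forall>y. \<exists>a b. b \<notin> P \<and> y * phi b - phi a \<in> J)"

end

theory Submission
  imports Defs
begin

text \<open>Since \<open>s\<close> is a strong divisor, each element \<open>x\<close> either lies in every \<open>Rs\<^sup>n\<close> or divides
  some power \<open>s\<^sup>n\<close>. Hence \<open>P = \<Inter>\<^sub>n Rs\<^sup>n\<close> is the complement of the saturation of the powers
  of \<open>s\<close>: it is prime, localizing at \<open>R - P\<close> is the same as inverting \<open>s\<close>, a prime avoids \<open>P\<close>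
  exactly when it contains \<open>s\<close>, and every ideal not inside \<open>P\<close> contains some \<open>s\<^sup>n\<close> and so
  all of \<open>P\<close>. Because \<open>s\<close> is regular, \<open>P = s\<^sup>n P\<close> for all \<open>n\<close>, which makes the image of \<open>P\<close>
  in \<open>R\<^sub>s\<close> an ideal.\<close>

lemma cr_idealD:
  assumes "cr_ideal I"
  shows cr_ideal_zero: "0 \<in> I"
    and cr_ideal_add: "x \<in> I \<Longrightarrow> y \<in> I \<Longrightarrow> x + y \<in> I"
    and cr_ideal_mult_left: "x \<in> I \<Longrightarrow> r * x \<in> I"
  using assms unfolding cr_ideal_def by auto

lemma cr_ideal_INT:
  assumes "\<And>n. cr_ideal (I n)"
  shows "cr_ideal (\<Inter>n. I n)"
  using assms cr_idealD unfolding cr_ideal_def by simp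

lemma ideal_gen_cr_ideal: "cr_ideal I \<Longrightarrow> ideal_gen I = I"
  unfolding ideal_gen_def by blast

lemma principal_mem: "x \<in> principal t \<longleftrightarrow> (\<exists>r. x = r * t)"
  unfolding principal_def by auto

lemma principal_self: "t \<in> principal t"
  unfolding principal_mem by (rule exI[of _ 1]) simp

lemma cr_ideal_principal: "cr_ideal (principal t)"
  unfolding cr_ideal_def
proof (intro conjI ballI allI)
  show "0 \<in> principal t" unfolding principal_mem by (rule exI[of _ 0]) simp
next
  fix x y assume "x \<in> principal t" "y \<in> principal t"
  then obtain a b where "x = a * t" "y = b * t" unfolding principal_mem by blast
  then have "x + y = (a + b) * t" by (simp add: distrib_right)
  then show "x + y \<in> principal t" unfolding principal_mem by blast
next
  fix r x assume "x \<in> principal t"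
  then obtain a where "x = a * t" unfolding principal_mem by blast
  then have "r * x = (r * a) * t" by (simp add: mult.assoc)
  then show "r * x \<in> principal t" unfolding principal_mem by blast
qed

lemma cr_regular_power:
  assumes "cr_regular s"
  shows "cr_regular (s ^ n)"
proof (induction n)
  case 0
  then show ?case by (simp add: cr_regular_def)
next
  case (Suc n)
  show ?case
    unfolding cr_regular_def
  proof (intro allI impI)
    fix x assume "s ^ Suc n * x = 0"
    then have "s * (s ^ n * x) = 0" by (simp add: mult.assoc)
    with assms have "s ^ n * x = 0" unfolding cr_regular_def by blast
    with Suc.IH show "x = 0" unfolding cr_regular_def by blast
  qed
qed

lemma cr_prime_ideal_power_mem:
  assumes "cr_prime_ideal Q" "x ^ n \<in> Q"
  shows "x \<in> Q"
  using assms(2)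
proof (induction n)
  case 0
  then have "r \<in> Q" for r
    using assms(1) cr_ideal_mult_left[of Q 1 r] unfolding cr_prime_ideal_def by simp
  with assms(1) show ?case unfolding cr_prime_ideal_def by blast
next
  case (Suc n)
  with assms(1) show ?case unfolding cr_prime_ideal_def by auto
qed

lemma cr_homD:
  assumes "cr_hom phi"
  shows cr_hom_add: "phi (x + y) = phi x + phi y"
    and cr_hom_mult: "phi (x * y) = phi x * phi y"
  using assms unfolding cr_hom_def by simp_all

lemma cr_hom_zero: "cr_hom phi \<Longrightarrow> phi 0 = 0"
  using cr_hom_add[of phi 0 0] by simp

lemma cr_hom_diff: "cr_hom phi \<Longrightarrow> phi (a - b) = phi a - phi b"
  using cr_hom_add[of phi "a - b" b] by (simp add: eq_diff_eq)

lemma is_localization_inj: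
  assumes "is_localization T phi" "\<And>t. t \<in> T \<Longrightarrow> cr_regular t"
  shows "inj phi"
proof (rule injI)
  fix a b assume "phi a = phi b"
  moreover have "cr_hom phi" using assms(1) unfolding is_localization_def by blast
  ultimately have "phi (a - b) = 0" by (simp add: cr_hom_diff)
  then obtain t where "t \<in> T" "t * (a - b) = 0"
    using assms(1) unfolding is_localization_def by blast
  with assms(2) have "a - b = 0" unfolding cr_regular_def by blast
  then show "a = b" by simp
qed

lemma is_localization_divisor_closed:
  assumes loc: "is_localization T phi" and "T \<subseteq> T'"
    and div: "\<And>t'. t' \<in> T' \<Longrightarrow> \<exists>t\<in>T. \<exists>c. t = c * t'"
  shows "is_localization T' phi"
  unfolding is_localization_def
proof (intro conjI ballI allI)
  have hom: "cr_hom phi" using loc unfolding is_localization_def by blast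
  then show "cr_hom phi" .
  fix t' assume "t' \<in> T'"
  then obtain t c where t: "t \<in> T" "t = c * t'" using div by blast
  then obtain w where "phi t * w = 1" using loc unfolding is_localization_def cr_unit_def by blast
  then have "phi t' * (phi c * w) = 1"
    using t(2) by (simp add: cr_hom_mult[OF hom] algebra_simps)
  then show "cr_unit (phi t')" unfolding cr_unit_def by blast
next
  fix y show "\<exists>r. \<exists>t\<in>T'. y * phi t = phi r"
    using loc \<open>T \<subseteq> T'\<close> unfolding is_localization_def by blast
next
  fix r
  have "(\<exists>t\<in>T. t * r = 0) \<longleftrightarrow> (\<exists>t'\<in>T'. t' * r = 0)"
    using \<open>T \<subseteq> T'\<close> div by (metis mult.assoc mult_zero_right subsetD)
  then show "phi r = 0 \<longleftrightarrow> (\<exists>t\<in>T'. t * r = 0)"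
    using loc unfolding is_localization_def by blast
qed

lemma strong_divisor_principal_cases:
  assumes "strong_divisor s"
  shows "r \<in> principal s \<or> s \<in> principal r"
  using assms cr_ideal_principal[of r] principal_self[of r] principal_self[of s]
  unfolding strong_divisor_def by blast

lemma strong_divisor_power_cases:
  assumes "strong_divisor s"
  shows "x \<in> principal (s ^ n) \<or> s ^ n \<in> principal x"
proof (induction n)
  case 0
  then show ?case by (simp add: principal_mem)
next
  case (Suc n)
  show ?case
  proof (cases "s ^ n \<in> principal x")
    case True
    then obtain c where "s ^ n = c * x" by (auto simp: principal_mem)
    then have "s ^ Suc n = (s * c) * x" by (simp add: mult.assoc)
    then show ?thesis by (auto simp: principal_mem)
  next
    case False
    with Suc obtain r where r: "x = r * s ^ n" by (auto simp: principal_mem)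
    from strong_divisor_principal_cases[OF assms, of r] show ?thesis
    proof
      assume "r \<in> principal s"
      then obtain d where "r = d * s" by (auto simp: principal_mem)
      then have "x = d * s ^ Suc n" using r by (simp add: ac_simps)
      then show ?thesis by (auto simp: principal_mem)
    next
      assume "s \<in> principal r"
      then obtain c where "s = c * r" by (auto simp: principal_mem)
      then have "s ^ Suc n = c * x" using r by (simp add: ac_simps)
      then show ?thesis by (auto simp: principal_mem)
    qed
  qed
qed

lemma power_notin_principal_Suc:
  assumes "cr_regular s" "\<not> cr_unit s"
  shows "s ^ n \<notin> principal (s ^ Suc n)"
proof
  assume "s ^ n \<in> principal (s ^ Suc n)"
  then obtain r where "s ^ n = r * s ^ Suc n" by (auto simp: principal_mem)
  then have "s ^ n * (1 - s * r) = 0" by (simp add: algebra_simps)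
  then have "1 - s * r = 0" using cr_regular_power[OF assms(1), of n] unfolding cr_regular_def by blast
  then have "s * r = 1" by simp
  with assms(2) show False unfolding cr_unit_def by blast
qed

locale nonunit_strong_divisor =
  fixes s :: "'a::comm_ring_1"
  assumes strong: "strong_divisor s" and nonunit: "\<not> cr_unit s"
begin

definition core :: "'a set" where
  "core = (\<Inter>n. principal (s ^ n))"

lemma regular: "cr_regular s"
  using strong unfolding strong_divisor_def by blast

lemma core_mem: "x \<in> core \<longleftrightarrow> (\<forall>n. x \<in> principal (s ^ n))"
  unfolding core_def by blast

lemma cr_ideal_core: "cr_ideal core"
  unfolding core_def by (intro cr_ideal_INT cr_ideal_principal)

lemma power_notin_core: "s ^ n \<notin> core"
  using power_notin_principal_Suc[OF regular nonunit, of n] unfolding core_mem by blast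

lemma notin_core_dvd_power:
  assumes "x \<notin> core"
  obtains n c where "s ^ n = c * x"
proof -
  obtain n where "x \<notin> principal (s ^ n)" using assms unfolding core_mem by blast
  then have "s ^ n \<in> principal x" using strong_divisor_power_cases[OF strong] by blast
  then show ?thesis using that by (auto simp: principal_mem)
qed

lemma core_eq_power_mult:
  assumes "p \<in> core"
  obtains q where "q \<in> core" "p = s ^ n * q"
proof -
  have "p \<in> principal (s ^ m)" for m using assms unfolding core_mem by blast
  then obtain q where q: "p = q * s ^ n" unfolding principal_mem by blast
  have "q \<in> principal (s ^ k)" for k
  proof -
    obtain r where "p = r * s ^ (n + k)" using \<open>\<And>m. p \<in> principal (s ^ m)\<close>
      unfolding principal_mem by blast
    with q have "s ^ n * (r * s ^ k - q) = 0" by (simp add: algebra_simps power_add)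
    then have "r * s ^ k - q = 0"
      using cr_regular_power[OF regular, of n] unfolding cr_regular_def by blast
    then show ?thesis by (auto simp: principal_mem)
  qed
  then have "q \<in> core" unfolding core_mem by blast
  with q that show ?thesis by (simp add: mult.commute)
qed

lemma prime_core: "cr_prime_ideal core"
  unfolding cr_prime_ideal_def
proof (intro conjI allI impI)
  show "cr_ideal core" by (rule cr_ideal_core)
  show "core \<noteq> UNIV" using power_notin_core[of 0] by auto
  fix x y assume xy: "x * y \<in> core"
  show "x \<in> core \<or> y \<in> core"
  proof (rule ccontr)
    assume "\<not> (x \<in> core \<or> y \<in> core)"
    then have "x \<notin> core" "y \<notin> core" by blast+
    obtain a u where a: "s ^ a = u * x" using \<open>x \<notin> core\<close> by (rule notin_core_dvd_power)
    obtain b v where b: "s ^ b = v * y" using \<open>y \<notin> core\<close> by (rule notin_core_dvd_power)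
    have "s ^ (a + b) = (u * v) * (x * y)" using a b by (simp add: power_add ac_simps)
    also have "\<dots> \<in> core" using xy by (rule cr_ideal_mult_left[OF cr_ideal_core])
    finally show False using power_notin_core by blast
  qed
qed

lemma ideal_not_subset_core:
  assumes "cr_ideal I" "\<not> I \<subseteq> core"
  shows "core \<subseteq> I"
proof
  obtain x where x: "x \<in> I" "x \<notin> core" using assms(2) by blast
  obtain n c where sn: "s ^ n = c * x" using x(2) by (rule notin_core_dvd_power)
  fix p assume "p \<in> core"
  then have "p \<in> principal (s ^ n)" unfolding core_mem by blast
  then obtain r where "p = r * s ^ n" unfolding principal_mem by blast
  with sn have "p = (r * c) * x" by (simp add: mult.assoc)
  with assms(1) x show "p \<in> I" by (simp add: cr_ideal_mult_left)
qed

lemma divided_prime_core: "divided_prime core"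
  unfolding divided_prime_def using prime_core ideal_not_subset_core by blast

lemma primes_below_core_eq_Dopen: "{Q \<in> Spec. Q \<subseteq> core} = Dopen s"
proof (rule set_eqI, rule iffI)
  fix Q assume "Q \<in> {Q \<in> Spec. Q \<subseteq> core}"
  then show "Q \<in> Dopen s" using power_notin_core[of 1] unfolding Dopen_def by auto
next
  fix Q assume "Q \<in> Dopen s"
  then have Q: "cr_prime_ideal Q" "s \<notin> Q" unfolding Dopen_def Spec_def by auto
  have "x \<in> core" if "x \<in> Q" for x
  proof (rule ccontr)
    assume "x \<notin> core"
    then obtain n c where "s ^ n = c * x" by (rule notin_core_dvd_power)
    with \<open>x \<in> Q\<close> Q(1) have "s ^ n \<in> Q"
      unfolding cr_prime_ideal_def by (simp add: cr_ideal_mult_left)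
    with Q show False using cr_prime_ideal_power_mem by blast
  qed
  with Q show "Q \<in> {Q \<in> Spec. Q \<subseteq> core}" unfolding Spec_def by auto
qed

lemma zariski_open_Dopen: "zariski_open (Dopen s)"
  unfolding zariski_open_def Dopen_def by (rule exI[of _ "{s}"]) auto

text \<open>If \<open>s\<^sup>m = c y\<close> with \<open>c \<notin> P\<close>, compare \<open>x c\<close> with \<open>s\<^sup>m\<close> and cancel \<open>c\<close> modulo the prime \<open>P\<close>.\<close>
lemma valuation_quotient_core: "valuation_quotient core"
  unfolding valuation_quotient_def
proof (intro conjI allI)
  show "cr_prime_ideal core" by (rule prime_core)
  fix x y
  show "(\<exists>r. x - r * y \<in> core) \<or> (\<exists>r. y - r * x \<in> core)"
  proof (cases "y \<in> core")
    case True
    then have "y - 0 * x \<in> core" by simp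
    then show ?thesis by blast
  next
    case False
    then obtain m c where sm: "s ^ m = c * y" by (rule notin_core_dvd_power)
    have "c \<notin> core"
    proof
      assume "c \<in> core"
      then have "y * c \<in> core" by (rule cr_ideal_mult_left[OF cr_ideal_core])
      then have "s ^ m \<in> core" using sm by (simp add: mult.commute)
      with power_notin_core show False by blast
    qed
    have cancel: "z \<in> core" if "c * z = 0" for z
    proof -
      have "c * z \<in> core" using that cr_ideal_zero[OF cr_ideal_core] by simp
      with \<open>c \<notin> core\<close> prime_core show ?thesis unfolding cr_prime_ideal_def by blast
    qed
    from strong_divisor_power_cases[OF strong, of "x * c" m] show ?thesis
    proof
      assume "x * c \<in> principal (s ^ m)"
      then obtain d where "x * c = d * s ^ m" by (auto simp: principal_mem)
      with sm have "c * (x - d * y) = 0" by (simp add: algebra_simps)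
      then show ?thesis using cancel by blast
    next
      assume "s ^ m \<in> principal (x * c)"
      then obtain e where "s ^ m = e * (x * c)" by (auto simp: principal_mem)
      with sm have "c * (y - e * x) = 0" by (simp add: algebra_simps)
      then show ?thesis using cancel by blast
    qed
  qed
qed

end

locale strong_divisor_localization = nonunit_strong_divisor s
  for s :: "'a::comm_ring_1" +
  fixes phi :: "'a \<Rightarrow> 'b::comm_ring_1"
  assumes loc: "is_localization (powers s) phi"
begin

lemma hom: "cr_hom phi"
  using loc unfolding is_localization_def by blast

lemma phi_mult: "phi (a * b) = phi a * phi b"
  by (rule cr_hom_mult[OF hom])

lemma phi_power_unit: "\<exists>w. phi (s ^ n) * w = 1"
  using loc unfolding is_localization_def powers_def cr_unit_def by blast

lemma phi_fraction: "\<exists>r n. y * phi (s ^ n) = phi r"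
  using loc unfolding is_localization_def powers_def by blast

lemma inj_phi: "inj phi"
  using is_localization_inj[OF loc] cr_regular_power[OF regular]
  unfolding powers_def by blast

lemma is_localization_compl_core: "is_localization (- core) phi"
proof (rule is_localization_divisor_closed[OF loc])
  show "powers s \<subseteq> - core" using power_notin_core unfolding powers_def by blast
  fix t assume "t \<in> - core"
  then obtain n c where "s ^ n = c * t" using notin_core_dvd_power by blast
  then show "\<exists>u\<in>powers s. \<exists>c. u = c * t" unfolding powers_def by blast
qed

lemma cr_ideal_image_core: "cr_ideal (phi ` core)"
  unfolding cr_ideal_def
proof (intro conjI ballI allI)
  show "0 \<in> phi ` core" using cr_ideal_zero[OF cr_ideal_core] cr_hom_zero[OF hom] by force
next
  fix a b assume "a \<in> phi ` core" "b \<in> phi ` core"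
  then obtain p q where "p \<in> core" "q \<in> core" "a = phi p" "b = phi q" by blast
  then have "a + b = phi (p + q)" "p + q \<in> core"
    using cr_hom_add[OF hom] cr_ideal_add[OF cr_ideal_core] by simp_all
  then show "a + b \<in> phi ` core" by blast
next
  fix y a assume "a \<in> phi ` core"
  then obtain p where p: "p \<in> core" "a = phi p" by auto
  obtain r n where rn: "y * phi (s ^ n) = phi r" using phi_fraction by blast
  obtain q where q: "q \<in> core" "p = s ^ n * q" using p(1) by (rule core_eq_power_mult)
  have "y * a = (y * phi (s ^ n)) * phi q" using p(2) q(2) by (simp add: phi_mult mult.assoc)
  also have "\<dots> = phi (r * q)" using rn by (simp add: phi_mult)
  finally have "y * a = phi (r * q)" .
  with q(1) show "y * a \<in> phi ` core" using cr_ideal_mult_left[OF cr_ideal_core] by blast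
qed

lemma image_core_iff: "phi r \<in> phi ` core \<longleftrightarrow> r \<in> core"
  using inj_phi by (auto dest: injD)

lemma image_core_ne_UNIV: "phi ` core \<noteq> UNIV"
  using image_core_iff[of 1] power_notin_core[of 0] by auto

lemma invertible_mod_image_core:
  assumes y: "y \<notin> phi ` core"
  shows "\<exists>z. y * z - 1 \<in> phi ` core"
proof -
  obtain r n where rn: "y * phi (s ^ n) = phi r" using phi_fraction by blast
  obtain w where w: "phi (s ^ n) * w = 1" using phi_power_unit by blast
  have "r \<notin> core"
  proof
    assume "r \<in> core"
    then obtain q where q: "q \<in> core" "r = s ^ n * q" by (rule core_eq_power_mult)
    with rn have "y * phi (s ^ n) * w = phi q * (phi (s ^ n) * w)" by (simp add: phi_mult ac_simps)
    with w have "y = phi q" by (simp add: mult.assoc)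
    with y q(1) show False by blast
  qed
  then obtain m c where sm: "s ^ m = c * r" by (rule notin_core_dvd_power)
  obtain v where v: "phi (s ^ m) * v = 1" using phi_power_unit by blast
  have "phi (s ^ m) = phi c * (y * phi (s ^ n))" using sm rn by (simp add: phi_mult)
  also have "\<dots> = y * (phi (s ^ n) * phi c)" by (simp add: ac_simps)
  finally have "phi (s ^ m) = y * (phi (s ^ n) * phi c)" .
  with v have "y * (phi (s ^ n) * phi c * v) = 1" by (simp add: ac_simps)
  then show ?thesis
    using cr_ideal_zero[OF cr_ideal_image_core] by (intro exI[of _ "phi (s ^ n) * phi c * v"]) simp
qed

lemma quotient_field_of_image_core: "quotient_field_of phi core (phi ` core)"
  unfolding quotient_field_of_def
proof (intro conjI allI impI)
  fix y
  obtain r n where "y * phi (s ^ n) = phi r" using phi_fraction by blast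
  then have "y * phi (s ^ n) - phi r \<in> phi ` core" using cr_ideal_zero[OF cr_ideal_image_core] by simp
  then show "\<exists>a b. b \<notin> core \<and> y * phi b - phi a \<in> phi ` core" using power_notin_core by blast
qed (use cr_ideal_image_core image_core_ne_UNIV invertible_mod_image_core image_core_iff in auto)

end

theorem mainTheorem8:
  fixes s :: "'a::comm_ring_1" and phi :: "'a \<Rightarrow> 'b::comm_ring_1"
  assumes "cr_local TYPE('a)"
    and "strong_divisor s"
    and "\<not> cr_unit s"
    and "is_localization (powers s) phi"
    and "P = (\<Inter>n. principal (s ^ n))"
  shows "cr_prime_ideal P
    \<and> zariski_open {Q \<in> Spec. Q \<subseteq> P}
    \<and> {Q \<in> Spec. Q \<subseteq> P} = Dopen s
    \<and> is_localization (- P) phi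
    \<and> ideal_gen (phi ` P) = phi ` P
    \<and> divided_prime P
    \<and> valuation_quotient P
    \<and> quotient_field_of phi P (phi ` P)"
proof -
  interpret strong_divisor_localization s phi
    using assms(2-4) by unfold_locales
  have P: "P = core" using assms(5) core_def by simp
  show ?thesis
    unfolding P primes_below_core_eq_Dopen
    using prime_core zariski_open_Dopen is_localization_compl_core
      ideal_gen_cr_ideal[OF cr_ideal_image_core] divided_prime_core
      valuation_quotient_core quotient_field_of_image_core
    by blast
qed

end
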